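(* Let $A,C,E_w,F_w,E_f,F_f$ be given matrices, and let $\boldsymbol{\phi}(\mathbf{x},\mathbf{u})$ be a nonlinear function that is Lipschitz continuous on $\mathcal{D}\times\mathcal{U}$ with Lipschitz constant $\gamma>0$, i.e. $\|\boldsymbol{\phi}(\mathbf{x},\mathbf{u})-\boldsymbol{\phi}(\hat{\mathbf{x}},\mathbf{u})\|\le\gamma\|\mathbf{x}-\hat{\mathbf{x}}\|$ for all $\mathbf{u}\in\mathcal{U}$, $\mathbf{x},\hat{\mathbf{x}}\in\mathcal{D}$. For a matrix $L$ write $\bar{A}=A-LC$, $\bar{E}_w=E_w-LF_w$, $\bar{E}_f=E_f-LF_f$, $\bar{C}=C$, $\bar{F}_w=F_w$, $\bar{F}_f=F_f$. Suppose there exist matrices $L$, $P$, $Q$ (with $P,Q$ symmetric positive definite), scalars $\alpha,\beta>0$, and non-negative scalars $\varepsilon_1,\varepsilon_2$ such that \[ \begin{bmatrix} \bar{A}^\top P + P\bar{A} + \bar{C}^\top\bar{C} + \varepsilon_1\gamma^2 I & P\bar{E}_w + \bar{C}^\top\bar{F}_w & P\\ * & -\alpha^2 I + \bar{F}_w^\top\bar{F}_w & 0\\ * & * & -\varepsilon_1 I \end{bmatrix}\prec 0, \qquad \begin{bmatrix} \bar{A}^\top Q + Q\bar{A} - \bar{C}^\top\bar{C} + \varepsilon_2\gamma^2 I & Q\bar{E}_f - \bar{C}^\top\bar{F}_f & Q\\ * & -\beta^2 I + \bar{F}_f^\top\bar{F}_f & 0\\ * & * & -\varepsilon_2 I \end{bmatrix}\prec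 0 . \] Then there exist non-negative scalars $\epsilon_1,\epsilon_2,\epsilon_3,\epsilon_4$ and real scalars $\rho,\delta,\varphi$ such that, with the same $L$, $P$, $Q$ (and $\alpha,\beta$), \[ \begin{bmatrix} \bar{A}^\top P + P\bar{A} + \bar{C}^\top\bar{C} + (\epsilon_1\rho+\epsilon_2\delta)I & P\bar{E}_w + \bar{C}^\top\bar{F}_w & P + \tfrac12(\epsilon_2\varphi-\epsilon_1)I\\ * & -\alpha^2 I + \bar{F}_w^\top\bar{F}_w & 0\\ * & * & -\epsilon_2 I \end{bmatrix}\prec 0, \] \[ \begin{bmatrix} \bar{A}^\top Q + Q\bar{A} - \bar{C}^\top\bar{C} + (\epsilon_3\rho+\epsilon_4\delta)I & Q\bar{E}_f - \bar{C}^\top\bar{F}_f & Q + \tfrac12(\epsilon_4\varphi-\epsilon_3)I\\ * & -\beta^2 I + \bar{F}_f^\top\bar{F}_f & 0\\ * & * & -\epsilon_4 I \end{bmatrix}\prec 0 . \]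
   Context: $\mathcal{D}$ and $\mathcal{U}$ are the box-shaped feasible state and input regions (Cartesian products of closed intervals). In the matrices, $*$ denotes blocks determined by symmetry, and $M\prec 0$ means $M$ is negative definite. In the paper, $\rho$ plays the role of a one-sided Lipschitz constant and $\delta,\varphi$ of quadratic inner-boundedness constants of $\boldsymbol{\phi}$, i.e. $\langle\boldsymbol{\phi}(\mathbf{x},\mathbf{u})-\boldsymbol{\phi}(\hat{\mathbf{x}},\mathbf{u}),\mathbf{x}-\hat{\mathbf{x}}\rangle\le\rho\|\mathbf{x}-\hat{\mathbf{x}}\|^2$ and $\|\boldsymbol{\phi}(\mathbf{x},\mathbf{u})-\boldsymbol{\phi}(\hat{\mathbf{x}},\mathbf{u})\|^2\le\varphi\langle\mathbf{x}-\hat{\mathbf{x}},\boldsymbol{\phi}(\mathbf{x},\mathbf{u})-\boldsymbol{\phi}(\hat{\mathbf{x}},\mathbf{u})\rangle+\delta\|\mathbf{x}-\hat{\mathbf{x}}\|^2$ on $\mathcal{D}\times\mathcal{U}$. *)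

theory Defs
  imports "HOL-Analysis.Analysis"
begin

text \<open>Symmetric 3x3 block matrix; the lower blocks (marked * in the paper) are
  determined by symmetry (transposes of the upper blocks).\<close>
definition sym_block3 ::
  "real^'a^'a \<Rightarrow> real^'b^'a \<Rightarrow> real^'c^'a \<Rightarrow> real^'b^'b \<Rightarrow> real^'c^'b \<Rightarrow> real^'c^'c
   \<Rightarrow> real^('a + 'b + 'c)^('a + 'b + 'c)" where
  "sym_block3 M11 M12 M13 M22 M23 M33 = (\<chi> i j.
     (case i of
        Inl a \<Rightarrow> (case j of Inl a' \<Rightarrow> M11 $ a $ a' | Inr (Inl b) \<Rightarrow> M12 $ a $ b
                           | Inr (Inr c) \<Rightarrow> M13 $ a $ c)
      | Inr (Inl b) \<Rightarrow> (case j of Inl a' \<Rightarrow> M12 $ a' $ b | Inr (Inl b') \<Rightarrow> M22 $ b $ b'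
                           | Inr (Inr c) \<Rightarrow> M23 $ b $ c)
      | Inr (Inr c) \<Rightarrow> (case j of Inl a' \<Rightarrow> M13 $ a' $ c | Inr (Inl b') \<Rightarrow> M23 $ b' $ c
                           | Inr (Inr c') \<Rightarrow> M33 $ c $ c')))"

definition neg_def :: "real^'n^'n \<Rightarrow> bool" where
  "neg_def M \<longleftrightarrow> transpose M = M \<and> (\<forall>x. x \<noteq> 0 \<longrightarrow> x \<bullet> (M *v x) < 0)"

definition pos_def :: "real^'n^'n \<Rightarrow> bool" where
  "pos_def M \<longleftrightarrow> transpose M = M \<and> (\<forall>x. x \<noteq> 0 \<longrightarrow> x \<bullet> (M *v x) > 0)"

end

theory Submission
  imports Defs
begin

(* A gamma-Lipschitz phi is one-sided Lipschitz with rho = gamma (Cauchy-Schwarz) and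
   quadratically inner-bounded with delta = gamma^2, varphi = 0. With the multipliers
   (0, epsilon1) and (0, epsilon2) the two new LMIs then become literally the given ones. *)

lemma inner_le_norm_sq_of_norm_le:
  fixes a b :: "'a::real_inner"
  assumes "norm a \<le> \<gamma> * norm b"
  shows "a \<bullet> b \<le> \<gamma> * (norm b)\<^sup>2"
proof -
  have "a \<bullet> b \<le> norm a * norm b"
    by (rule norm_cauchy_schwarz)
  also have "\<dots> \<le> (\<gamma> * norm b) * norm b"
    using assms by (rule mult_right_mono) simp
  finally show ?thesis
    by (simp add: power2_eq_square mult.assoc)
qed

lemma norm_sq_le_of_norm_le:
  fixes a b :: "'a::real_normed_vector"
  assumes "norm a \<le> \<gamma> * norm b"
  shows "(norm a)\<^sup>2 \<le> \<gamma>\<^sup>2 * (norm b)\<^sup>2"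
proof -
  have "(norm a)\<^sup>2 \<le> (\<gamma> * norm b)\<^sup>2"
    using assms by (rule power_mono) simp
  then show ?thesis
    by (simp add: power_mult_distrib)
qed

theorem theorem2:
  fixes A :: "real^'n^'n" and C :: "real^'n^'p"
    and Ew :: "real^'w^'n" and Fw :: "real^'w^'p"
    and Ef :: "real^'f^'n" and Ff :: "real^'f^'p"
    and phi :: "real^'n \<Rightarrow> real^'m \<Rightarrow> real^'n"
    and xlo xhi :: "real^'n" and ulo uhi :: "real^'m"
    and D :: "(real^'n) set" and U :: "(real^'m) set"
    and \<gamma> :: real
    and L :: "real^'p^'n" and P Q :: "real^'n^'n"
    and \<alpha> \<beta> \<epsilon>1 \<epsilon>2 :: real
  assumes D_box: "D = cbox xlo xhi" and U_box: "U = cbox ulo uhi"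
    and gamma_pos: "\<gamma> > 0"
    and lipschitz: "\<forall>u\<in>U. \<forall>x\<in>D. \<forall>xh\<in>D. norm (phi x u - phi xh u) \<le> \<gamma> * norm (x - xh)"
    and P_pd: "pos_def P" and Q_pd: "pos_def Q"
    and \<alpha>_pos: "\<alpha> > 0" and \<beta>_pos: "\<beta> > 0"
    and \<epsilon>1_nn: "\<epsilon>1 \<ge> 0" and \<epsilon>2_nn: "\<epsilon>2 \<ge> 0"
    and LMI1: "neg_def (sym_block3
        (transpose (A - L ** C) ** P + P ** (A - L ** C) + transpose C ** C + mat (\<epsilon>1 * \<gamma>\<^sup>2))
        (P ** (Ew - L ** Fw) + transpose C ** Fw)
        P
        (- mat (\<alpha>\<^sup>2) + transpose Fw ** Fw)
        0
        (- mat \<epsilon>1))"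
    and LMI2: "neg_def (sym_block3
        (transpose (A - L ** C) ** Q + Q ** (A - L ** C) - transpose C ** C + mat (\<epsilon>2 * \<gamma>\<^sup>2))
        (Q ** (Ef - L ** Ff) - transpose C ** Ff)
        Q
        (- mat (\<beta>\<^sup>2) + transpose Ff ** Ff)
        0
        (- mat \<epsilon>2))"
  shows "\<exists>e1 e2 e3 e4 \<rho> \<delta> \<phi>. e1 \<ge> 0 \<and> e2 \<ge> 0 \<and> e3 \<ge> 0 \<and> e4 \<ge> 0
    \<and> (\<forall>u\<in>U. \<forall>x\<in>D. \<forall>xh\<in>D. (phi x u - phi xh u) \<bullet> (x - xh) \<le> \<rho> * (norm (x - xh))\<^sup>2)
    \<and> (\<forall>u\<in>U. \<forall>x\<in>D. \<forall>xh\<in>D. (norm (phi x u - phi xh u))\<^sup>2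
          \<le> \<phi> * ((x - xh) \<bullet> (phi x u - phi xh u)) + \<delta> * (norm (x - xh))\<^sup>2)
    \<and> neg_def (sym_block3
        (transpose (A - L ** C) ** P + P ** (A - L ** C) + transpose C ** C + mat (e1 * \<rho> + e2 * \<delta>))
        (P ** (Ew - L ** Fw) + transpose C ** Fw)
        (P + mat ((e2 * \<phi> - e1) / 2))
        (- mat (\<alpha>\<^sup>2) + transpose Fw ** Fw)
        0
        (- mat e2))
    \<and> neg_def (sym_block3
        (transpose (A - L ** C) ** Q + Q ** (A - L ** C) - transpose C ** C + mat (e3 * \<rho> + e4 * \<delta>))
        (Q ** (Ef - L ** Ff) - transpose C ** Ff)
        (Q + mat ((e4 * \<phi> - e3) / 2))
        (- mat (\<beta>\<^sup>2) + transpose Ff ** Ff)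
        0
        (- mat e4))"
proof -
  have one_sided: "(phi x u - phi xh u) \<bullet> (x - xh) \<le> \<gamma> * (norm (x - xh))\<^sup>2"
    and inner_bounded: "(norm (phi x u - phi xh u))\<^sup>2 \<le> \<gamma>\<^sup>2 * (norm (x - xh))\<^sup>2"
    if "u \<in> U" "x \<in> D" "xh \<in> D" for u x xh
    using lipschitz that
    by (simp_all add: inner_le_norm_sq_of_norm_le norm_sq_le_of_norm_le)
  show ?thesis
    apply (rule exI[of _ 0], rule exI[of _ \<epsilon>1], rule exI[of _ 0], rule exI[of _ \<epsilon>2])
    apply (rule exI[of _ \<gamma>], rule exI[of _ "\<gamma>\<^sup>2"], rule exI[of _ 0])
    using one_sided inner_bounded LMI1 LMI2 \<epsilon>1_nn \<epsilon>2_nn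
    by (simp add: mult.commute)
qed

end
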